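(* For the RHA process, all $n\ge1$ and $j\ge1$, $$H(X^n_j)\ge\max_{l}\Big(\log\binom{k_{l-1}^2}{k_l}-\log\binom{k_{l-1}^2-2^{n-l}}{k_l-2^{n-l}}\Big)P(A_{nl}),$$ where the maximum ranges over $l\in\{1,\dots,n\}$ with $k_l\ge2^{n-l}$, and $A_{nl}$ is the event that the $2^{n-l}$ consecutive length-$2^l$ blocks $X^l_{2^{n-l}},\dots,X^l_{2^{n-l+1}-1}$ composing $X^n_1$ are pairwise distinct.
   Context: Random hierarchical association (RHA) process. Fix positive integers $(k_n)_{n\ge0}$ (perplexities) with $k_{n-1}\le k_n\le k_{n-1}^2$ for all $n\ge1$. On a probability space $(\Omega,\mathcal J,P)$ let, for each $n\ge1$, $(L_{nj},R_{nj})_{j=1}^{k_n}$ be the lexicographically sorted enumeration of a uniformly random $k_n$-element subset of $\{1,\dots,k_{n-1}\}^2$ (each of the $\binom{k_{n-1}^2}{k_n}$ subsets equally likely), independently over $n$. Let $(C_n)_{n\ge0}$ be independent, independent of all $(L_{nj},R_{nj})$, with $C_n$ uniform on $\{1,\dots,k_n\}$. Define strings $Y^0_j=j$ (length 1) for $1\le j\le k_0$ and $Y^n_j=Y^{n-1}_{L_{nj}}Y^{n-1}_{R_{nj}}$ (concatenation). The RHA process is $\mathcal X=Y^0_{C_0}Y^1_{C_1}Y^2_{C_2}\cdots=X_1X_2X_3\cdots$, $X_{k:l}=X_k\cdots X_l$; for $n\ge0$, $j\ge1$, $X^n_j=X_{j2^n:(j+1)2^n-1}$ (so $X^n_1=Y^n_{C_n}$).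 $H(X)=\mathbb E_P[-\log P(X)]$ with natural logarithm. *)

theory Defs
  imports "HOL-Probability.Probability"
begin

text \<open>Randomness of level n: the random k_n-subset of {1..k_{n-1}}^2 (empty at level 0)
  together with the index C_n uniform on {1..k_n}. Levels are independent.\<close>

definition rha_level :: "(nat \<Rightarrow> nat) \<Rightarrow> nat \<Rightarrow> ((nat \<times> nat) set \<times> nat) pmf" where
  "rha_level k n =
     (case n of
        0 \<Rightarrow> pair_pmf (return_pmf {}) (pmf_of_set {1..k 0})
      | Suc m \<Rightarrow> pair_pmf
           (pmf_of_set {A. A \<subseteq> {1..k m} \<times> {1..k m} \<and> card A = k (Suc m)})
           (pmf_of_set {1..k (Suc m)}))"

definition rha_space :: "(nat \<Rightarrow> nat) \<Rightarrow> (nat \<Rightarrow> (nat \<times> nat) set \<times> nat) measure" where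
  "rha_space k = PiM UNIV (\<lambda>n. measure_pmf (rha_level k n))"

definition rha_LR :: "(nat \<Rightarrow> nat) \<Rightarrow> (nat \<Rightarrow> (nat \<times> nat) set \<times> nat) \<Rightarrow> nat \<Rightarrow> nat \<Rightarrow> nat \<times> nat" where
  "rha_LR k \<omega> n j =
     [(a, b). a \<leftarrow> [1..<k (n - 1) + 1], b \<leftarrow> [1..<k (n - 1) + 1], (a, b) \<in> fst (\<omega> n)] ! (j - 1)"

fun rha_Y :: "(nat \<Rightarrow> nat) \<Rightarrow> (nat \<Rightarrow> (nat \<times> nat) set \<times> nat) \<Rightarrow> nat \<Rightarrow> nat \<Rightarrow> nat list" where
  "rha_Y k \<omega> 0 j = [j]"
| "rha_Y k \<omega> (Suc n) j =
     rha_Y k \<omega> n (fst (rha_LR k \<omega> (Suc n) j)) @ rha_Y k \<omega> n (snd (rha_LR k \<omega> (Suc n) j))"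

text \<open>X_p (p \<ge> 1): the p-th symbol of Y^0_{C_0} Y^1_{C_1} Y^2_{C_2} ...;
  the first p blocks already have length 2^p - 1 \<ge> p.\<close>
definition rha_X :: "(nat \<Rightarrow> nat) \<Rightarrow> (nat \<Rightarrow> (nat \<times> nat) set \<times> nat) \<Rightarrow> nat \<Rightarrow> nat" where
  "rha_X k \<omega> p = concat (map (\<lambda>m. rha_Y k \<omega> m (snd (\<omega> m))) [0..<p]) ! (p - 1)"

definition rha_block :: "(nat \<Rightarrow> nat) \<Rightarrow> (nat \<Rightarrow> (nat \<times> nat) set \<times> nat) \<Rightarrow> nat \<Rightarrow> nat \<Rightarrow> nat list" where
  "rha_block k \<omega> n j = map (rha_X k \<omega>) [j * 2 ^ n..<(j + 1) * 2 ^ n]"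

definition rha_A :: "(nat \<Rightarrow> nat) \<Rightarrow> nat \<Rightarrow> nat \<Rightarrow> (nat \<Rightarrow> (nat \<times> nat) set \<times> nat) set" where
  "rha_A k n l = {\<omega> \<in> space (rha_space k).
      distinct (map (\<lambda>i. rha_block k \<omega> l i) [2 ^ (n - l)..<2 ^ (n - l + 1)])}"

definition ent :: "'a measure \<Rightarrow> ('a \<Rightarrow> 'b) \<Rightarrow> real" where
  "ent M Z = (\<integral>\<omega>. - ln (measure M {\<omega>' \<in> space M. Z \<omega>' = Z \<omega>}) \<partial>M)"

end

theory Submission
  imports Defs
begin

text \<open>Fix l and let B be the set of strings whose 2^(n-l) consecutive blocks of length 2^l are pairwise
  distinct. Almost surely every level is well formed; then X^n_j = Y^n_i for some index i, and every
  length-2^l block of Y^n_i has the form Y^{l-1}_a Y^{l-1}_b for a pair (a, b) of the level-l subset.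
  Since Y^{l-1} is injective, a value z \<in> B of X^n_j forces the level-l subset to contain 2^(n-l)
  prescribed pairs. Resampling level l alone, this has probability at most
  C(k_{l-1}^2 - 2^(n-l), k_l - 2^(n-l)) / C(k_{l-1}^2, k_l) = exp (- c), with c the bracket in the
  statement, so H(X^n_j) \<ge> c P(X^n_j \<in> B).
  Finally, the level-n index that selects X^n_j is uniform and independent of the pair sets, hence the
  law of X^n_j does not depend on j, and P(X^n_j \<in> B) = P(X^n_1 \<in> B) = P(A_{nl}).\<close>

section \<open>Entropy of a discrete random variable\<close>

lemma (in prob_space) ent_eq_sum:
  assumes Z: "Z \<in> M \<rightarrow>\<^sub>M count_space UNIV" and V: "finite V" and AEV: "AE \<omega> in M. Z \<omega> \<in> V"
  shows "ent M Z = (\<Sum>v\<in>V. prob {\<omega> \<in> space M. Z \<omega> = v} * - ln (prob {\<omega> \<in> space M. Z \<omega> = v}))"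
proof -
  define p where "p v = prob {\<omega> \<in> space M. Z \<omega> = v}" for v
  have Z_sets: "{\<omega> \<in> space M. Z \<omega> = v} \<in> events" for v
    using measurable_sets[OF Z, of "{v}"] by (simp add: vimage_def Int_def conj_commute)
  have "ent M Z = (\<integral>\<omega>. (\<Sum>v\<in>V. indicator {\<omega> \<in> space M. Z \<omega> = v} \<omega> * - ln (p v)) \<partial>M)"
    unfolding ent_def
  proof (rule integral_cong_AE)
    show "(\<lambda>\<omega>. - ln (prob {\<omega>' \<in> space M. Z \<omega>' = Z \<omega>})) \<in> borel_measurable M"
      using measurable_compose[OF Z, of "\<lambda>v. - ln (p v)" borel] by (simp add: p_def)
    show "(\<lambda>\<omega>. \<Sum>v\<in>V. indicator {\<omega> \<in> space M. Z \<omega> = v} \<omega> * - ln (p v)) \<in> borel_measurable M"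
      using Z_sets by (intro borel_measurable_sum borel_measurable_times borel_measurable_indicator) auto
    show "AE \<omega> in M. - ln (prob {\<omega>' \<in> space M. Z \<omega>' = Z \<omega>}) =
        (\<Sum>v\<in>V. indicator {\<omega> \<in> space M. Z \<omega> = v} \<omega> * - ln (p v))"
      using AEV AE_space
    proof eventually_elim
      case (elim \<omega>)
      then have "(\<Sum>v\<in>V. indicator {\<omega> \<in> space M. Z \<omega> = v} \<omega> * - ln (p v)) =
          (\<Sum>v\<in>V. if v = Z \<omega> then - ln (p v) else 0)"
        by (intro sum.cong) (auto simp: indicator_def)
      with elim V show ?case by (simp add: p_def)
    qed
  qed
  also have "\<dots> = (\<Sum>v\<in>V. p v * - ln (p v))"
    using Z_sets by (subst Bochner_Integration.integral_sum) (auto simp: p_def emeasure_eq_measure)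
  finally show ?thesis by (simp add: p_def)
qed

lemma (in prob_space) ent_ge_light_values:
  assumes Z: "Z \<in> M \<rightarrow>\<^sub>M count_space UNIV" and V: "finite V" and AEV: "AE \<omega> in M. Z \<omega> \<in> V"
    and light: "\<And>v. v \<in> B \<Longrightarrow> prob {\<omega> \<in> space M. Z \<omega> = v} \<le> exp (- c)"
  shows "c * prob {\<omega> \<in> space M. Z \<omega> \<in> B} \<le> ent M Z"
proof -
  define p where "p v = prob {\<omega> \<in> space M. Z \<omega> = v}" for v
  have Z_sets: "{\<omega> \<in> space M. Z \<omega> \<in> S} \<in> events" for S
    using measurable_sets[OF Z, of S] by (simp add: vimage_def Int_def conj_commute)
  have "(\<Sum>v\<in>V \<inter> B. p v) * c = (\<Sum>v\<in>V \<inter> B. p v * c)"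
    by (simp add: sum_distrib_right)
  also have "\<dots> \<le> (\<Sum>v\<in>V \<inter> B. p v * - ln (p v))"
  proof (intro sum_mono)
    fix v assume "v \<in> V \<inter> B"
    then have le: "p v \<le> exp (- c)" using light by (simp add: p_def)
    show "p v * c \<le> p v * - ln (p v)"
    proof (cases "p v = 0")
      case False
      then have "0 < p v" by (simp add: p_def zero_less_measure_iff)
      with le have "ln (p v) \<le> - c" by (metis ln_exp ln_le_cancel_iff exp_gt_zero)
      with \<open>0 < p v\<close> show ?thesis by (intro mult_left_mono) auto
    qed simp
  qed
  also have "\<dots> \<le> (\<Sum>v\<in>V. p v * - ln (p v))"
  proof (intro sum_mono2 V)
    fix v
    have "ln (p v) \<le> 0"
      by (cases "p v = 0") (auto simp: p_def zero_less_measure_iff)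
    then show "0 \<le> p v * - ln (p v)" by (simp add: p_def mult_nonneg_nonpos)
  qed auto
  also have "\<dots> = ent M Z"
    unfolding p_def by (rule ent_eq_sum[OF Z V AEV, symmetric])
  finally have "(\<Sum>v\<in>V \<inter> B. p v) * c \<le> ent M Z" .
  moreover have "(\<Sum>v\<in>V \<inter> B. p v) = prob {\<omega> \<in> space M. Z \<omega> \<in> V \<inter> B}"
    unfolding p_def using V Z_sets[of "{_}"]
    by (subst finite_measure_finite_Union[symmetric]) (auto simp: disjoint_family_on_def intro: arg_cong[where f=prob])
  moreover have "\<dots> = prob {\<omega> \<in> space M. Z \<omega> \<in> B}"
    using AEV Z_sets by (intro finite_measure_eq_AE) auto
  ultimately show ?thesis by (simp add: mult.commute)
qed

section \<open>Resampling one coordinate of a product of pmfs\<close>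

lemma measurable_PiM_fun_upd:
  "(\<lambda>(\<omega>, x). fun_upd \<omega> s x) \<in> measurable (PiM UNIV N \<Otimes>\<^sub>M N s) (PiM UNIV N)"
  using measurable_add_dim[of s UNIV N] by (simp add: insert_UNIV)

lemma nn_integral_PiM_resample:
  assumes N: "\<And>i. prob_space (N i)" and f: "f \<in> borel_measurable (PiM UNIV N)"
  shows "(\<integral>\<^sup>+\<omega>. f \<omega> \<partial>PiM UNIV N) = (\<integral>\<^sup>+\<omega>. (\<integral>\<^sup>+x. f (fun_upd \<omega> s x) \<partial>N s) \<partial>PiM UNIV N)"
proof -
  let ?M = "PiM UNIV N" and ?upd = "\<lambda>(x, \<omega>). fun_upd \<omega> s x"
  interpret pair_sigma_finite "N s" ?M
    by (intro pair_sigma_finite.intro prob_space_imp_sigma_finite prob_space_PiM N)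
  have upd: "?upd \<in> measurable (N s \<Otimes>\<^sub>M ?M) ?M"
    using measurable_comp[OF measurable_pair_swap' measurable_PiM_fun_upd]
    by (simp add: comp_def case_prod_unfold)
  have "(\<integral>\<^sup>+\<omega>. f \<omega> \<partial>?M) = (\<integral>\<^sup>+\<omega>. f \<omega> \<partial>distr (N s \<Otimes>\<^sub>M ?M) ?M ?upd)"
    using distr_pair_PiM_eq_PiM[of UNIV N s] N by (simp add: insert_UNIV)
  also have "\<dots> = (\<integral>\<^sup>+p. f (?upd p) \<partial>(N s \<Otimes>\<^sub>M ?M))"
    using upd f by (intro nn_integral_distr) simp_all
  also have "\<dots> = (\<integral>\<^sup>+\<omega>. (\<integral>\<^sup>+x. f (fun_upd \<omega> s x) \<partial>N s) \<partial>?M)"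
    using f upd by (subst nn_integral_snd[symmetric]) (auto intro: measurable_comp)
  finally show ?thesis .
qed

lemma emeasure_PiM_pmf_resample:
  assumes A: "A \<in> sets (PiM UNIV (\<lambda>i. measure_pmf (p i)))"
  shows "emeasure (PiM UNIV (\<lambda>i. measure_pmf (p i))) A =
    (\<integral>\<^sup>+\<omega>. emeasure (p s) {x. fun_upd \<omega> s x \<in> A} \<partial>PiM UNIV (\<lambda>i. measure_pmf (p i)))"
proof -
  let ?M = "PiM UNIV (\<lambda>i. measure_pmf (p i))"
  have "emeasure ?M A = (\<integral>\<^sup>+\<omega>. indicator A \<omega> \<partial>?M)"
    using A by simp
  also have "\<dots> = (\<integral>\<^sup>+\<omega>. (\<integral>\<^sup>+x. indicator A (fun_upd \<omega> s x) \<partial>p s) \<partial>?M)"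
    using A by (intro nn_integral_PiM_resample prob_space_measure_pmf) simp
  also have "\<dots> = (\<integral>\<^sup>+\<omega>. emeasure (p s) {x. fun_upd \<omega> s x \<in> A} \<partial>?M)"
    by (simp flip: nn_integral_indicator add: indicator_def)
  finally show ?thesis .
qed

lemma borel_measurable_emeasure_pmf_resample:
  assumes A: "A \<in> sets (PiM UNIV (\<lambda>i. measure_pmf (p i)))"
  shows "(\<lambda>\<omega>. emeasure (p s) {x. fun_upd \<omega> s x \<in> A}) \<in> borel_measurable (PiM UNIV (\<lambda>i. measure_pmf (p i)))"
proof -
  let ?M = "PiM UNIV (\<lambda>i. measure_pmf (p i))"
  have sf: "sigma_finite_measure (measure_pmf (p s))"
    by (intro prob_space_imp_sigma_finite prob_space_measure_pmf)
  have "(\<lambda>q. indicator A ((\<lambda>(\<omega>, x). fun_upd \<omega> s x) q) :: ennreal) \<in> borel_measurable (?M \<Otimes>\<^sub>M p s)"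
    using A by (intro measurable_compose[OF measurable_PiM_fun_upd]) simp
  then have "(\<lambda>\<omega>. \<integral>\<^sup>+x. indicator A (fun_upd \<omega> s x) \<partial>p s) \<in> borel_measurable ?M"
    using sigma_finite_measure.borel_measurable_nn_integral_fst[OF sf,
        of "\<lambda>q. indicator A ((\<lambda>(\<omega>, x). fun_upd \<omega> s x) q)" ?M] by simp
  then show ?thesis
    by (simp flip: nn_integral_indicator add: indicator_def)
qed

lemma card_mult_emeasure_pair_pmf_of_set_snd:
  assumes S: "finite S" "S \<noteq> {}" and H: "\<And>i a b b'. H i (a, b) = H i (a, b')"
  shows "of_nat (card S) * emeasure (pair_pmf p (pmf_of_set S)) {x. H (snd x) x} =
    (\<Sum>i\<in>S. emeasure (pair_pmf p (pmf_of_set S)) {x. H i x})"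
proof -
  have card: "(of_nat (card S) :: ennreal) \<noteq> 0" "(of_nat (card S) :: ennreal) \<noteq> top"
    using S by auto
  have pair: "emeasure (pair_pmf p (pmf_of_set S)) {x. G x} =
      (\<integral>\<^sup>+a. (\<Sum>b\<in>S. indicator {x. G x} (a, b)) / of_nat (card S) \<partial>p)" for G
    using S by (simp flip: nn_integral_indicator add: nn_integral_pair_pmf' nn_integral_pmf_of_set)
  have "of_nat (card S) * emeasure (pair_pmf p (pmf_of_set S)) {x. H (snd x) x} =
      (\<integral>\<^sup>+a. of_nat (card S) * ((\<Sum>b\<in>S. indicator {x. H b x} (a, b)) / of_nat (card S)) \<partial>p)"
    by (simp add: pair nn_integral_cmult indicator_def)
  also have "\<dots> = (\<integral>\<^sup>+a. (\<Sum>b\<in>S. indicator {x. H b x} (a, b)) \<partial>p)"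
    using card by (simp add: ennreal_times_divide mult_divide_eq_ennreal mult.commute[of "of_nat (card S)"])
  also have "\<dots> = (\<Sum>i\<in>S. \<integral>\<^sup>+a. indicator {x. H i x} (a, i) \<partial>p)"
    by (rule nn_integral_sum) simp
  also have "\<dots> = (\<Sum>i\<in>S. emeasure (pair_pmf p (pmf_of_set S)) {x. H i x})"
  proof (rule sum.cong[OF refl])
    fix i
    have "(\<Sum>b\<in>S. indicator {x. H i x} (a, b)) = (\<Sum>b\<in>S. indicator {x. H i x} (a, i) :: ennreal)" for a
      using H[of i a _ i] by (intro sum.cong) (auto simp: indicator_def)
    then have "(\<Sum>b\<in>S. indicator {x. H i x} (a, b)) = of_nat (card S) * (indicator {x. H i x} (a, i) :: ennreal)" for a
      by simp
    then show "(\<integral>\<^sup>+a. indicator {x. H i x} (a, i) \<partial>p) = emeasure (pair_pmf p (pmf_of_set S)) {x. H i x}"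
      using card by (simp add: pair mult.commute[of "of_nat (card S)"] mult_divide_eq_ennreal)
  qed
  finally show ?thesis .
qed

section \<open>The probability space and its discrete random variables\<close>

lemma space_rha_space [simp]: "space (rha_space k) = UNIV"
  by (simp add: rha_space_def space_PiM)

lemma prob_space_rha_space: "prob_space (rha_space k)"
  unfolding rha_space_def by (intro prob_space_PiM prob_space_measure_pmf)

abbreviation rha_rv :: "(nat \<Rightarrow> nat) \<Rightarrow> ((nat \<Rightarrow> (nat \<times> nat) set \<times> nat) \<Rightarrow> 'a) \<Rightarrow> bool" where
  "rha_rv k f \<equiv> f \<in> rha_space k \<rightarrow>\<^sub>M count_space UNIV"

lemma rha_rv_level: "rha_rv k (\<lambda>\<omega>. g (\<omega> s))"
proof -
  have "(\<lambda>\<omega>. \<omega> s) \<in> rha_space k \<rightarrow>\<^sub>M measure_pmf (rha_level k s)"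
    unfolding rha_space_def by (rule measurable_component_singleton) simp
  then show ?thesis by (rule measurable_compose) simp
qed

lemma rha_rv_comp: "rha_rv k f \<Longrightarrow> rha_rv k (\<lambda>\<omega>. h (f \<omega>))"
  by (erule measurable_compose) simp

lemma rha_rv_select:
  fixes g :: "_ \<Rightarrow> 'a::countable"
  assumes "rha_rv k g" "\<And>i. rha_rv k (f i)"
  shows "rha_rv k (\<lambda>\<omega>. f (g \<omega>) \<omega>)"
  by (rule measurable_compose_countable[where f="\<lambda>i \<omega>. f i \<omega>", OF assms(2) assms(1)])

lemma rha_rv_comp2:
  fixes f :: "_ \<Rightarrow> 'a::countable"
  assumes "rha_rv k f" "rha_rv k g"
  shows "rha_rv k (\<lambda>\<omega>. h (f \<omega>) (g \<omega>))"
  by (rule rha_rv_select[where f="\<lambda>i \<omega>. h i (g \<omega>)", OF assms(1) rha_rv_comp[OF assms(2)]])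

lemma rha_rv_map:
  fixes f :: "'b \<Rightarrow> _ \<Rightarrow> 'a::countable"
  assumes "\<And>x. x \<in> set xs \<Longrightarrow> rha_rv k (f x)"
  shows "rha_rv k (\<lambda>\<omega>. map (\<lambda>x. f x \<omega>) xs)"
  using assms
proof (induction xs)
  case (Cons a xs)
  then have "rha_rv k (\<lambda>\<omega>. f a \<omega> # map (\<lambda>x. f x \<omega>) xs)"
    by (intro rha_rv_comp2[where h="(#)"]) auto
  then show ?case by simp
qed simp

lemma rha_rv_rha_Y: "rha_rv k (\<lambda>\<omega>. rha_Y k \<omega> n i)"
proof (induction n arbitrary: i)
  case (Suc n)
  have "rha_rv k (\<lambda>\<omega>. rha_LR k \<omega> (Suc n) i)"
    unfolding rha_LR_def by (rule rha_rv_level)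
  then show ?case
    using rha_rv_select[where f="\<lambda>p \<omega>. rha_Y k \<omega> n (fst p) @ rha_Y k \<omega> n (snd p)",
        OF _ rha_rv_comp2[where h="(@)", OF Suc Suc]]
    by simp
qed simp

lemma rha_rv_rha_block: "rha_rv k (\<lambda>\<omega>. rha_block k \<omega> n j)"
proof -
  have "rha_rv k (\<lambda>\<omega>. rha_Y k \<omega> m (snd (\<omega> m)))" for m
    by (rule rha_rv_select[OF rha_rv_level rha_rv_rha_Y])
  then have "rha_rv k (\<lambda>\<omega>. rha_X k \<omega> p)" for p
    unfolding rha_X_def by (rule rha_rv_comp[where h="\<lambda>xs. concat xs ! (p - 1)", OF rha_rv_map])
  then show ?thesis
    unfolding rha_block_def by (rule rha_rv_map)
qed

lemma sets_rha_space_Collect: "rha_rv k f \<Longrightarrow> {\<omega>. P (f \<omega>)} \<in> sets (rha_space k)"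
  using measurable_sets[of f "rha_space k" "count_space UNIV" "{x. P x}"] by (simp add: vimage_def)

lemma rha_rv_indicator: "A \<in> sets (rha_space k) \<Longrightarrow> rha_rv k (\<lambda>\<omega>. \<omega> \<in> A)"
  by (subst pred_def) simp

lemma emeasure_rha_space_resample:
  "A \<in> sets (rha_space k) \<Longrightarrow>
    emeasure (rha_space k) A = (\<integral>\<^sup>+\<omega>. emeasure (rha_level k s) {x. fun_upd \<omega> s x \<in> A} \<partial>rha_space k)"
  unfolding rha_space_def by (rule emeasure_PiM_pmf_resample)

lemma borel_measurable_rha_space_resample:
  "A \<in> sets (rha_space k) \<Longrightarrow>
    (\<lambda>\<omega>. emeasure (rha_level k s) {x. fun_upd \<omega> s x \<in> A}) \<in> borel_measurable (rha_space k)"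
  unfolding rha_space_def by (rule borel_measurable_emeasure_pmf_resample)

lemma sets_rha_space_select:
  fixes J :: "_ \<Rightarrow> 'a::countable"
  assumes "rha_rv k J" "\<And>i. F i \<in> sets (rha_space k)"
  shows "{\<omega>. \<omega> \<in> F (J \<omega>)} \<in> sets (rha_space k)"
  using rha_rv_select[OF assms(1) rha_rv_indicator[OF assms(2)]]
  by (rule sets_rha_space_Collect[where P="\<lambda>b. b"])

section \<open>Block structure of the strings\<close>

definition sub_block :: "nat \<Rightarrow> 'a list \<Rightarrow> nat \<Rightarrow> 'a list" where
  "sub_block l z q = take (2 ^ l) (drop (q * 2 ^ l) z)"

lemma sub_block_append_left:
  "(q + 1) * 2 ^ l \<le> length xs \<Longrightarrow> sub_block l (xs @ ys) q = sub_block l xs q"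
  by (simp add: sub_block_def)

lemma sub_block_append_right:
  "length xs = d * 2 ^ l \<Longrightarrow> d \<le> q \<Longrightarrow> sub_block l (xs @ ys) q = sub_block l ys (q - d)"
  by (simp add: sub_block_def diff_mult_distrib)

lemma sub_block_map_upt:
  assumes "a + (q + 1) * 2 ^ l \<le> b"
  shows "sub_block l (map f [a..<b]) q = map f [a + q * 2 ^ l..<a + (q + 1) * 2 ^ l]"
  using assms by (simp add: sub_block_def take_map drop_map drop_upt take_upt algebra_simps)

lemma length_rha_Y [simp]: "length (rha_Y k \<omega> n i) = 2 ^ n"
  by (induction n arbitrary: i) auto

text \<open>The level-l index of the q-th length-2^l block of Y^{l+d}_i.\<close>
fun rha_sub :: "(nat \<Rightarrow> nat) \<Rightarrow> (nat \<Rightarrow> (nat \<times> nat) set \<times> nat) \<Rightarrow> nat \<Rightarrow> nat \<Rightarrow> nat \<Rightarrow> nat \<Rightarrow> nat" where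
  "rha_sub k \<omega> l 0 i q = i"
| "rha_sub k \<omega> l (Suc d) i q =
     (if q < 2 ^ d then rha_sub k \<omega> l d (fst (rha_LR k \<omega> (Suc (l + d)) i)) q
      else rha_sub k \<omega> l d (snd (rha_LR k \<omega> (Suc (l + d)) i)) (q - 2 ^ d))"

lemma sub_block_rha_Y:
  "q < 2 ^ d \<Longrightarrow> sub_block l (rha_Y k \<omega> (l + d) i) q = rha_Y k \<omega> l (rha_sub k \<omega> l d i q)"
proof (induction d arbitrary: i q)
  case 0
  then show ?case by (simp add: sub_block_def)
next
  case (Suc d)
  show ?case
  proof (cases "q < 2 ^ d")
    case True
    then have "(q + 1) * 2 ^ l \<le> 2 ^ d * 2 ^ l"
      by (intro mult_right_mono) auto
    then have "(q + 1) * 2 ^ l \<le> length (rha_Y k \<omega> (l + d) (fst (rha_LR k \<omega> (Suc (l + d)) i)))"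
      by (simp add: power_add mult.commute)
    with True Suc.IH show ?thesis by (simp add: sub_block_append_left)
  next
    case False
    have len: "length (rha_Y k \<omega> (l + d) (fst (rha_LR k \<omega> (Suc (l + d)) i))) = 2 ^ d * 2 ^ l"
      by (simp add: power_add mult.commute)
    have "q - 2 ^ d < 2 ^ d" using False Suc.prems by simp
    with False Suc.IH show ?thesis
      by (simp add: sub_block_append_right[OF len])
  qed
qed

lemma length_concat_rha_Y:
  "length (concat (map (\<lambda>m. rha_Y k \<omega> m (snd (\<omega> m))) [0..<p])) = 2 ^ p - 1"
proof (induction p)
  case (Suc p)
  have "(1::nat) \<le> 2 ^ p" by simp
  with Suc show ?case by simp
qed simp

lemma rha_Y_eq_map_rha_X:
  "rha_Y k \<omega> m (snd (\<omega> m)) = map (rha_X k \<omega>) [2 ^ m..<2 ^ Suc m]"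
proof (rule nth_equalityI)
  fix t assume "t < length (rha_Y k \<omega> m (snd (\<omega> m)))"
  then have t: "t < 2 ^ m" by simp
  let ?f = "\<lambda>m. rha_Y k \<omega> m (snd (\<omega> m))"
  have "m < 2 ^ m + t" using less_exp[of m] by linarith
  then have "[0..<2 ^ m + t] = [0..<m] @ m # [Suc m..<2 ^ m + t]"
    using upt_add_eq_append[of 0 m "2 ^ m + t - m"] by (simp add: upt_conv_Cons)
  then have "concat (map ?f [0..<2 ^ m + t]) = concat (map ?f [0..<m]) @ ?f m @ concat (map ?f [Suc m..<2 ^ m + t])"
    by simp
  then have "rha_X k \<omega> (2 ^ m + t) = (concat (map ?f [0..<m]) @ ?f m @ concat (map ?f [Suc m..<2 ^ m + t])) ! (2 ^ m + t - 1)"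
    unfolding rha_X_def by (rule arg_cong)
  also have "\<dots> = ?f m ! t"
  proof -
    have "0 < (2::nat) ^ m" by simp
    then have "\<not> 2 ^ m + t - 1 < 2 ^ m - 1" "2 ^ m + t - 1 - (2 ^ m - 1) = t" by linarith+
    with t show ?thesis by (simp only: nth_append length_concat_rha_Y length_rha_Y if_False if_True)
  qed
  finally have "rha_X k \<omega> (2 ^ m + t) = ?f m ! t" .
  then show "?f m ! t = map (rha_X k \<omega>) [2 ^ m..<2 ^ Suc m] ! t"
    using t by simp
qed simp

lemma rha_block_one: "rha_block k \<omega> n 1 = rha_Y k \<omega> n (snd (\<omega> n))"
  by (simp add: rha_block_def rha_Y_eq_map_rha_X mult_2)

lemma rha_block_eq_sub_block:
  assumes "2 ^ a \<le> j" "j < 2 ^ Suc a"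
  shows "rha_block k \<omega> n j = sub_block n (rha_block k \<omega> (n + a) 1) (j - 2 ^ a)"
proof -
  have "(j - 2 ^ a + 1) * 2 ^ n \<le> 2 ^ a * 2 ^ n"
    using assms by (intro mult_right_mono) auto
  moreover have "2 ^ a * 2 ^ n + (j - 2 ^ a) * 2 ^ n = j * 2 ^ n"
    using assms by (simp flip: add_mult_distrib)
  ultimately show ?thesis
    unfolding rha_block_one rha_Y_eq_map_rha_X
    by (subst sub_block_map_upt) (simp_all add: rha_block_def power_add algebra_simps)
qed

lemma rha_block_eq_rha_Y:
  assumes "2 ^ a \<le> j" "j < 2 ^ Suc a"
  shows "rha_block k \<omega> n j = rha_Y k \<omega> n (rha_sub k \<omega> n a (snd (\<omega> (n + a))) (j - 2 ^ a))"
  unfolding rha_block_eq_sub_block[OF assms] rha_block_one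
  using assms by (simp add: sub_block_rha_Y)

lemma rha_A_eq:
  assumes "l \<le> n"
  shows "rha_A k n l = {\<omega>. distinct (map (sub_block l (rha_block k \<omega> n 1)) [0..<2 ^ (n - l)])}"
proof -
  have "map (rha_block k \<omega> l) [2 ^ (n - l)..<2 ^ (n - l + 1)] = map (sub_block l (rha_block k \<omega> n 1)) [0..<2 ^ (n - l)]"
    for \<omega>
  proof (rule nth_equalityI)
    fix q assume "q < length (map (rha_block k \<omega> l) [2 ^ (n - l)..<2 ^ (n - l + 1)])"
    then have "q < 2 ^ (n - l)" by simp
    then show "map (rha_block k \<omega> l) [2 ^ (n - l)..<2 ^ (n - l + 1)] ! q = map (sub_block l (rha_block k \<omega> n 1)) [0..<2 ^ (n - l)] ! q"
      using assms rha_block_eq_sub_block[of "n - l" "2 ^ (n - l) + q" k \<omega> l] by simp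
  qed simp
  then show ?thesis by (simp add: rha_A_def)
qed

definition nth_pair :: "nat \<Rightarrow> (nat \<times> nat) set \<Rightarrow> nat \<Rightarrow> nat \<times> nat" where
  "nth_pair K A t = filter (\<lambda>p. p \<in> A) (List.product [1..<K + 1] [1..<K + 1]) ! (t - 1)"

lemma list_comprehension_filter_product:
  "[(a, b). a \<leftarrow> xs, b \<leftarrow> ys, (a, b) \<in> A] = filter (\<lambda>p. p \<in> A) (List.product xs ys)"
proof -
  have "concat (map (\<lambda>b. if (a, b) \<in> A then [(a, b)] else []) ys) = filter (\<lambda>p. p \<in> A) (map (Pair a) ys)" for a
    by (induction ys) auto
  then show ?thesis by (induction xs) auto
qed

lemma rha_LR_eq_nth_pair: "rha_LR k \<omega> s = nth_pair (k (s - 1)) (fst (\<omega> s))"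
  by (simp add: fun_eq_iff rha_LR_def nth_pair_def list_comprehension_filter_product)

lemma bij_betw_nth_pair:
  assumes "A \<subseteq> {1..K} \<times> {1..K}"
  shows "bij_betw (nth_pair K A) {1..card A} A"
proof -
  let ?xs = "filter (\<lambda>p. p \<in> A) (List.product [1..<K + 1] [1..<K + 1])"
  have set: "set ?xs = A" using assms by (auto simp: atLeastLessThanSuc_atLeastAtMost)
  have dist: "distinct ?xs" by (simp add: distinct_product)
  have "bij_betw (\<lambda>t. ?xs ! t) {..<card A} A"
    using bij_betw_nth[OF dist, of "{..<card A}"] set distinct_card[OF dist]
    by (simp add: lessThan_atLeast0)
  moreover have "bij_betw (\<lambda>t. t - 1) {1..card A} {..<card A}"
    by (rule bij_betwI[where g=Suc]) auto
  ultimately show ?thesis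
    unfolding nth_pair_def by (rule bij_betw_trans[rotated, unfolded comp_def])
qed

lemma rha_Y_cong:
  "(\<And>m. m \<le> n \<Longrightarrow> fst (\<omega> m) = fst (\<omega>' m)) \<Longrightarrow> rha_Y k \<omega> n i = rha_Y k \<omega>' n i"
  by (induction n arbitrary: i) (simp_all add: rha_LR_def)

definition rha_pair_sets :: "(nat \<Rightarrow> nat) \<Rightarrow> nat \<Rightarrow> (nat \<times> nat) set set" where
  "rha_pair_sets k s = {A. A \<subseteq> {1..k (s - 1)} \<times> {1..k (s - 1)} \<and> card A = k s}"

definition rha_level_ok :: "(nat \<Rightarrow> nat) \<Rightarrow> nat \<Rightarrow> (nat \<times> nat) set \<times> nat \<Rightarrow> bool" where
  "rha_level_ok k m x \<longleftrightarrow> snd x \<in> {1..k m} \<and> (1 \<le> m \<longrightarrow> fst x \<in> rha_pair_sets k m)"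

definition rha_ok :: "(nat \<Rightarrow> nat) \<Rightarrow> (nat \<Rightarrow> (nat \<times> nat) set \<times> nat) \<Rightarrow> bool" where
  "rha_ok k \<omega> \<longleftrightarrow> (\<forall>m. rha_level_ok k m (\<omega> m))"

lemma rha_level_eq_pair_pmf:
  "1 \<le> s \<Longrightarrow> rha_level k s = pair_pmf (pmf_of_set (rha_pair_sets k s)) (pmf_of_set {1..k s})"
  by (cases s) (auto simp: rha_level_def rha_pair_sets_def)

lemma finite_rha_pair_sets: "finite (rha_pair_sets k s)"
  unfolding rha_pair_sets_def
  by (rule finite_subset[of _ "Pow ({1..k (s - 1)} \<times> {1..k (s - 1)})"]) auto

lemma nth_pair_mem_level_ok:
  assumes "rha_level_ok k s x" "1 \<le> s" "t \<in> {1..k s}"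
  shows "nth_pair (k (s - 1)) (fst x) t \<in> fst x" "fst x \<subseteq> {1..k (s - 1)} \<times> {1..k (s - 1)}"
  using assms bij_betw_apply[OF bij_betw_nth_pair, of "fst x" "k (s - 1)"]
  by (auto simp: rha_level_ok_def rha_pair_sets_def)

locale rha =
  fixes k :: "nat \<Rightarrow> nat"
  assumes k_pos: "\<And>m. 0 < k m"
    and k_le_square: "\<And>m. 1 \<le> m \<Longrightarrow> k m \<le> (k (m - 1))\<^sup>2"
begin

lemma rha_pair_sets_nonempty: "1 \<le> s \<Longrightarrow> rha_pair_sets k s \<noteq> {}"
proof -
  assume "1 \<le> s"
  then have "k s \<le> card ({1..k (s - 1)} \<times> {1..k (s - 1)})"
    using k_le_square by (simp add: card_cartesian_product power2_eq_square)
  then obtain A where "A \<subseteq> {1..k (s - 1)} \<times> {1..k (s - 1)}" "card A = k s"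
    by (rule obtain_subset_with_card_n)
  then show ?thesis unfolding rha_pair_sets_def by auto
qed

lemma set_pmf_rha_level: "x \<in> set_pmf (rha_level k m) \<Longrightarrow> rha_level_ok k m x"
proof (cases "m = 0")
  case True
  then show "x \<in> set_pmf (rha_level k m) \<Longrightarrow> ?thesis"
    using k_pos[of 0] by (auto simp: rha_level_def rha_level_ok_def)
next
  case False
  then show "x \<in> set_pmf (rha_level k m) \<Longrightarrow> ?thesis"
    using k_pos[of m] finite_rha_pair_sets[of k m] rha_pair_sets_nonempty[of m]
    by (auto simp: rha_level_eq_pair_pmf rha_level_ok_def)
qed

lemma AE_rha_ok: "AE \<omega> in rha_space k. rha_ok k \<omega>"
  unfolding rha_ok_def AE_all_countable
proof
  fix m
  have "AE x in measure_pmf (rha_level k m). rha_level_ok k m x"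
    by (simp add: AE_measure_pmf_iff set_pmf_rha_level)
  then show "AE \<omega> in rha_space k. rha_level_ok k m (\<omega> m)"
    unfolding rha_space_def
    by (intro AE_PiM_component prob_space_measure_pmf) auto
qed

lemma rha_LR_mem:
  assumes "rha_ok k \<omega>" "1 \<le> s" "t \<in> {1..k s}"
  shows "rha_LR k \<omega> s t \<in> fst (\<omega> s)" "rha_LR k \<omega> s t \<in> {1..k (s - 1)} \<times> {1..k (s - 1)}"
  using nth_pair_mem_level_ok[of k s "\<omega> s" t] assms by (auto simp: rha_ok_def rha_LR_eq_nth_pair)

lemma inj_on_rha_LR: "rha_ok k \<omega> \<Longrightarrow> 1 \<le> s \<Longrightarrow> inj_on (rha_LR k \<omega> s) {1..k s}"
  using bij_betw_nth_pair[of "fst (\<omega> s)" "k (s - 1)"]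
  by (auto simp: rha_ok_def rha_level_ok_def rha_pair_sets_def rha_LR_eq_nth_pair bij_betw_def)

lemma set_rha_Y_subset: "rha_ok k \<omega> \<Longrightarrow> i \<in> {1..k n} \<Longrightarrow> set (rha_Y k \<omega> n i) \<subseteq> {1..k 0}"
proof (induction n arbitrary: i)
  case (Suc n)
  then show ?case
    using rha_LR_mem(2)[OF Suc.prems(1), of "Suc n" i] by (auto simp: mem_Times_iff)
qed simp

lemma inj_on_rha_Y: "rha_ok k \<omega> \<Longrightarrow> inj_on (rha_Y k \<omega> n) {1..k n}"
proof (induction n)
  case (Suc n)
  show ?case
  proof (rule inj_onI)
    fix i i' assume i: "i \<in> {1..k (Suc n)}" and i': "i' \<in> {1..k (Suc n)}"
      and eq: "rha_Y k \<omega> (Suc n) i = rha_Y k \<omega> (Suc n) i'"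
    let ?LR = "rha_LR k \<omega> (Suc n)"
    have "rha_Y k \<omega> n (fst (?LR i)) = rha_Y k \<omega> n (fst (?LR i'))"
      "rha_Y k \<omega> n (snd (?LR i)) = rha_Y k \<omega> n (snd (?LR i'))"
      using eq by (simp_all add: append_eq_append_conv)
    moreover have "?LR i \<in> {1..k n} \<times> {1..k n}" "?LR i' \<in> {1..k n} \<times> {1..k n}"
      using rha_LR_mem(2)[OF Suc.prems _ i] rha_LR_mem(2)[OF Suc.prems _ i'] by simp_all
    ultimately have "?LR i = ?LR i'"
      using inj_onD[OF Suc.IH[OF Suc.prems]] by (metis mem_Times_iff prod_eqI)
    then show "i = i'"
      using inj_onD[OF inj_on_rha_LR[OF Suc.prems, of "Suc n"]] i i' by simp
  qed
qed (simp add: inj_on_def)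

lemma rha_sub_in_range:
  "rha_ok k \<omega> \<Longrightarrow> i \<in> {1..k (l + d)} \<Longrightarrow> q < 2 ^ d \<Longrightarrow> rha_sub k \<omega> l d i q \<in> {1..k l}"
proof (induction d arbitrary: i q)
  case (Suc d)
  have "rha_LR k \<omega> (Suc (l + d)) i \<in> {1..k (l + d)} \<times> {1..k (l + d)}"
    using rha_LR_mem(2)[OF Suc.prems(1), of "Suc (l + d)" i] Suc.prems(2) by simp
  then show ?case
    using Suc.IH[OF Suc.prems(1)] Suc.prems(3) by (auto simp: mem_Times_iff)
qed simp

lemma rha_block_is_rha_Y:
  assumes "rha_ok k \<omega>" "1 \<le> j"
  obtains i where "i \<in> {1..k n}" "rha_block k \<omega> n j = rha_Y k \<omega> n i"
proof -
  obtain a where a: "2 ^ a \<le> j" "j < 2 ^ Suc a"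
    using ex_power_ivl1[of 2 j] assms(2) by auto
  have "snd (\<omega> (n + a)) \<in> {1..k (n + a)}"
    using assms(1) by (simp add: rha_ok_def rha_level_ok_def)
  with a show ?thesis
    by (intro that[OF rha_sub_in_range[OF assms(1)] rha_block_eq_rha_Y[OF a]]) simp_all
qed

lemma sub_block_rha_Y_pair:
  assumes ok: "rha_ok k \<omega>" and l: "1 \<le> l" "l \<le> n" and i: "i \<in> {1..k n}" and q: "q < 2 ^ (n - l)"
  obtains a b where "(a, b) \<in> fst (\<omega> l)" "a \<in> {1..k (l - 1)}" "b \<in> {1..k (l - 1)}"
    "sub_block l (rha_Y k \<omega> n i) q = rha_Y k \<omega> (l - 1) a @ rha_Y k \<omega> (l - 1) b"
proof -
  define p where "p = rha_sub k \<omega> l (n - l) i q"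
  have p: "p \<in> {1..k l}"
    unfolding p_def using l i q by (intro rha_sub_in_range[OF ok]) simp_all
  have "sub_block l (rha_Y k \<omega> n i) q = rha_Y k \<omega> l p"
    using sub_block_rha_Y[OF q, of l k \<omega> i] l by (simp add: p_def)
  also have "\<dots> = rha_Y k \<omega> (l - 1) (fst (rha_LR k \<omega> l p)) @ rha_Y k \<omega> (l - 1) (snd (rha_LR k \<omega> l p))"
    using l by (cases l) simp_all
  finally show ?thesis
    using rha_LR_mem[OF ok l(1) p] by (intro that[of "fst (rha_LR k \<omega> l p)" "snd (rha_LR k \<omega> l p)"]) auto
qed

end

section \<open>Probabilities at a single level\<close>

lemma inj_on_append_pairs:
  assumes inj: "inj_on \<phi> A" and len: "\<And>a. a \<in> A \<Longrightarrow> length (\<phi> a) = L"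
  shows "inj_on (\<lambda>p. \<phi> (fst p) @ \<phi> (snd p)) (A \<times> A)"
proof (rule inj_onI)
  fix p p' assume p: "p \<in> A \<times> A" and p': "p' \<in> A \<times> A" and "\<phi> (fst p) @ \<phi> (snd p) = \<phi> (fst p') @ \<phi> (snd p')"
  then have "\<phi> (fst p) = \<phi> (fst p') \<and> \<phi> (snd p) = \<phi> (snd p')"
    using len by (auto simp: append_eq_append_conv mem_Times_iff)
  with p p' show "p = p'"
    using inj_onD[OF inj] by (auto simp: mem_Times_iff prod_eq_iff)
qed

lemma card_supersets_with_card:
  assumes U: "finite U" and T: "T \<subseteq> U" and Tm: "card T \<le> m"
  shows "card {A. A \<subseteq> U \<and> card A = m \<and> T \<subseteq> A} = (card U - card T) choose (m - card T)"
proof -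
  have fT: "finite T" using U T finite_subset by blast
  have "bij_betw (\<lambda>A. A - T) {A. A \<subseteq> U \<and> card A = m \<and> T \<subseteq> A} {B. B \<subseteq> U - T \<and> card B = m - card T}"
  proof (rule bij_betwI[where g="\<lambda>B. B \<union> T"])
    show "(\<lambda>B. B \<union> T) \<in> {B. B \<subseteq> U - T \<and> card B = m - card T} \<rightarrow> {A. A \<subseteq> U \<and> card A = m \<and> T \<subseteq> A}"
    proof
      fix B assume B: "B \<in> {B. B \<subseteq> U - T \<and> card B = m - card T}"
      then have "card (B \<union> T) = card B + card T"
        using fT finite_subset[OF _ U] by (intro card_Un_disjoint) auto
      then show "B \<union> T \<in> {A. A \<subseteq> U \<and> card A = m \<and> T \<subseteq> A}" using B T Tm by auto
    qed
  qed (use T fT in \<open>auto simp: card_Diff_subset\<close>)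
  then have "card {A. A \<subseteq> U \<and> card A = m \<and> T \<subseteq> A} = card {B. B \<subseteq> U - T \<and> card B = m - card T}"
    by (rule bij_betw_same_card)
  also have "\<dots> = (card U - card T) choose (m - card T)"
    using U T fT by (simp add: n_subsets card_Diff_subset)
  finally show ?thesis .
qed

context rha
begin

lemma emeasure_rha_level_supset:
  assumes s: "1 \<le> s" and T: "T \<subseteq> {1..k (s - 1)} \<times> {1..k (s - 1)}" "card T \<le> k s"
  shows "emeasure (rha_level k s) {x. T \<subseteq> fst x} =
    ennreal (real (((k (s - 1))\<^sup>2 - card T) choose (k s - card T)) / real ((k (s - 1))\<^sup>2 choose k s))"
proof -
  let ?U = "{1..k (s - 1)} \<times> {1..k (s - 1)}"
  have U: "finite ?U" "card ?U = (k (s - 1))\<^sup>2"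
    by (simp_all add: card_cartesian_product power2_eq_square)
  have "emeasure (rha_level k s) {x. T \<subseteq> fst x} = emeasure (map_pmf fst (rha_level k s)) {A. T \<subseteq> A}"
    by (simp add: vimage_def)
  also have "\<dots> = emeasure (pmf_of_set (rha_pair_sets k s)) {A. T \<subseteq> A}"
    using s by (simp add: rha_level_eq_pair_pmf map_fst_pair_pmf)
  also have "\<dots> = card (rha_pair_sets k s \<inter> {A. T \<subseteq> A}) / card (rha_pair_sets k s)"
    using rha_pair_sets_nonempty[OF s] finite_rha_pair_sets by (rule emeasure_pmf_of_set)
  also have "rha_pair_sets k s \<inter> {A. T \<subseteq> A} = {A. A \<subseteq> ?U \<and> card A = k s \<and> T \<subseteq> A}"
    unfolding rha_pair_sets_def by blast
  also have "card \<dots> = ((k (s - 1))\<^sup>2 - card T) choose (k s - card T)"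
    using card_supersets_with_card[OF U(1) T] U(2) by simp
  also have "card (rha_pair_sets k s) = (k (s - 1))\<^sup>2 choose k s"
    using n_subsets[OF U(1), of "k s"] U(2) by (simp add: rha_pair_sets_def)
  finally show ?thesis
    by (simp add: ennreal_of_nat_eq_real_of_nat divide_ennreal)
qed

lemma sum_emeasure_rha_level_select:
  assumes s: "1 \<le> s"
    and S: "card {p \<in> {1..k (s - 1)} \<times> {1..k (s - 1)}. sel p = i} = k (s - 1)"
  shows "(\<Sum>t\<in>{1..k s}. emeasure (rha_level k s) {x. sel (nth_pair (k (s - 1)) (fst x) t) = i}) =
    ennreal (real (k s) / real (k (s - 1)))"
proof -
  let ?K = "k (s - 1)" and ?L = "measure_pmf (rha_level k s)"
  let ?S = "{p \<in> {1..?K} \<times> {1..?K}. sel p = i}"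
  have "(\<Sum>t\<in>{1..k s}. emeasure ?L {x. sel (nth_pair ?K (fst x) t) = i}) =
      (\<integral>\<^sup>+x. (\<Sum>t\<in>{1..k s}. indicator {x. sel (nth_pair ?K (fst x) t) = i} x) \<partial>?L)"
    by (simp add: nn_integral_sum)
  also have "\<dots> = (\<integral>\<^sup>+x. (\<Sum>p\<in>?S. indicator {x. {p} \<subseteq> fst x} x) \<partial>?L)"
  proof (rule nn_integral_cong_AE, rule AE_pmfI)
    fix x assume "x \<in> set_pmf (rha_level k s)"
    then have ok: "rha_level_ok k s x" by (rule set_pmf_rha_level)
    then have sub: "fst x \<subseteq> {1..?K} \<times> {1..?K}" and card: "card (fst x) = k s"
      using s by (auto simp: rha_level_ok_def rha_pair_sets_def)
    have "(\<Sum>t\<in>{1..k s}. indicator {x. sel (nth_pair ?K (fst x) t) = i} x :: ennreal) =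
        of_nat (card {t \<in> {1..k s}. sel (nth_pair ?K (fst x) t) = i})"
      by (simp add: indicator_def sum.If_cases Int_def conj_commute)
    also have "card {t \<in> {1..k s}. sel (nth_pair ?K (fst x) t) = i} = card {p \<in> fst x. sel p = i}"
      using bij_betw_nth_pair[OF sub] card
      by (intro bij_betw_same_card[of "nth_pair ?K (fst x)"] bij_betw_Collect) simp_all
    also have "{p \<in> fst x. sel p = i} = ?S \<inter> fst x"
      using sub by auto
    also have "of_nat (card (?S \<inter> fst x)) = (\<Sum>p\<in>?S. indicator {x. {p} \<subseteq> fst x} x :: ennreal)"
      by (simp add: indicator_def sum.If_cases Int_def)
    finally show "(\<Sum>t\<in>{1..k s}. indicator {x. sel (nth_pair ?K (fst x) t) = i} x) =
        (\<Sum>p\<in>?S. indicator {x. {p} \<subseteq> fst x} x :: ennreal)" .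
  qed
  also have "\<dots> = (\<Sum>p\<in>?S. emeasure ?L {x. {p} \<subseteq> fst x})"
    by (simp add: nn_integral_sum)
  also have "\<dots> = of_nat ?K * ennreal (real ((?K\<^sup>2 - 1) choose (k s - 1)) / real (?K\<^sup>2 choose k s))"
    using k_pos[of s] S by (subst sum.cong[OF refl emeasure_rha_level_supset[OF s]]) auto
  also have "\<dots> = ennreal (real (k s) / real ?K)"
  proof -
    have "k s * (?K\<^sup>2 choose k s) = ?K\<^sup>2 * ((?K\<^sup>2 - 1) choose (k s - 1))"
      using times_binomial_minus1_eq[OF k_pos[of s]] by simp
    then have "real ?K * (real ((?K\<^sup>2 - 1) choose (k s - 1)) / real (?K\<^sup>2 choose k s)) = real (k s) / real ?K"
      using k_pos[of "s - 1"] k_le_square[OF s]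
      by (simp add: field_simps power2_eq_square flip: of_nat_mult)
    then show ?thesis
      by (simp add: ennreal_of_nat_eq_real_of_nat ennreal_mult[symmetric])
  qed
  finally show ?thesis .
qed

lemma sum_emeasure_rha_level_select_mem:
  assumes s: "1 \<le> s"
    and card: "\<And>i. i \<in> {1..k (s - 1)} \<Longrightarrow> card {p \<in> {1..k (s - 1)} \<times> {1..k (s - 1)}. sel p = i} = k (s - 1)"
    and range: "\<And>p. p \<in> {1..k (s - 1)} \<times> {1..k (s - 1)} \<Longrightarrow> sel p \<in> {1..k (s - 1)}"
  shows "(\<Sum>t\<in>{1..k s}. emeasure (rha_level k s) {x. sel (nth_pair (k (s - 1)) (fst x) t) \<in> G}) =
    of_nat (card (G \<inter> {1..k (s - 1)})) * ennreal (real (k s) / real (k (s - 1)))"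
proof -
  let ?K = "k (s - 1)" and ?L = "measure_pmf (rha_level k s)"
  let ?sel = "\<lambda>t x. sel (nth_pair ?K (fst x) t)"
  have "emeasure ?L {x. ?sel t x \<in> G} = emeasure ?L (\<Union>i\<in>G \<inter> {1..?K}. {x. ?sel t x = i})"
    if t: "t \<in> {1..k s}" for t
  proof (rule emeasure_eq_AE, rule AE_pmfI)
    fix x assume "x \<in> set_pmf (rha_level k s)"
    then have "?sel t x \<in> {1..?K}"
      using range nth_pair_mem_level_ok[OF set_pmf_rha_level s t] by blast
    then show "x \<in> {x. ?sel t x \<in> G} \<longleftrightarrow> x \<in> (\<Union>i\<in>G \<inter> {1..?K}. {x. ?sel t x = i})"
      by auto
  qed simp_all
  also have "\<dots> t = (\<Sum>i\<in>G \<inter> {1..?K}. emeasure ?L {x. ?sel t x = i})" for t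
    by (rule sum_emeasure[symmetric]) (auto simp: disjoint_family_on_def)
  finally have "(\<Sum>t\<in>{1..k s}. emeasure ?L {x. ?sel t x \<in> G}) =
      (\<Sum>i\<in>G \<inter> {1..?K}. \<Sum>t\<in>{1..k s}. emeasure ?L {x. ?sel t x = i})"
    by (subst sum.swap) (rule sum.cong[OF refl])
  also have "\<dots> = (\<Sum>i\<in>G \<inter> {1..?K}. ennreal (real (k s) / real ?K))"
    using s card by (intro sum.cong refl sum_emeasure_rha_level_select) auto
  finally show ?thesis by simp
qed

lemma emeasure_rha_level_contains_pairs_le:
  fixes \<phi> :: "nat \<Rightarrow> 'a list" and cs :: "nat \<Rightarrow> 'a list"
  assumes s: "1 \<le> s" and inj: "inj_on \<phi> {1..k (s - 1)}"
    and len: "\<And>a. a \<in> {1..k (s - 1)} \<Longrightarrow> length (\<phi> a) = L"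
    and dist: "distinct (map cs [0..<m])" and m: "m \<le> k s"
  shows "emeasure (rha_level k s)
      {x. \<forall>q<m. \<exists>a\<in>{1..k (s - 1)}. \<exists>b\<in>{1..k (s - 1)}. (a, b) \<in> fst x \<and> \<phi> a @ \<phi> b = cs q}
    \<le> ennreal (real (((k (s - 1))\<^sup>2 - m) choose (k s - m)) / real ((k (s - 1))\<^sup>2 choose k s))"
    (is "emeasure _ ?E \<le> _")
proof (cases "?E = {}")
  case False
  let ?U = "{1..k (s - 1)} \<times> {1..k (s - 1)}"
  define \<psi> where "\<psi> p = \<phi> (fst p) @ \<phi> (snd p)" for p
  define R where "R = {p \<in> ?U. \<exists>q<m. \<psi> p = cs q}"
  have inj\<psi>: "inj_on \<psi> ?U"
    unfolding \<psi>_def by (rule inj_on_append_pairs[OF inj len])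
  from False obtain x0 where x0: "x0 \<in> ?E" by blast
  have "\<psi> ` R = cs ` {..<m}"
    using x0 by (force simp: R_def \<psi>_def)
  then have card: "card R = m"
    using dist card_image[OF inj_on_subset[OF inj\<psi>], of R]
    by (simp add: R_def distinct_map card_image lessThan_atLeast0)
  have "R \<subseteq> fst x" if x: "x \<in> ?E" for x
  proof
    fix p assume "p \<in> R"
    then obtain q where q: "q < m" "\<psi> p = cs q" and p: "p \<in> ?U" by (auto simp: R_def)
    from x q(1) obtain a b where ab: "(a, b) \<in> ?U" "(a, b) \<in> fst x" "\<phi> a @ \<phi> b = cs q"
      by blast
    then have "(a, b) = p"
      using inj_onD[OF inj\<psi> _ ab(1) p] q(2) by (simp add: \<psi>_def)
    with ab(2) show "p \<in> fst x" by simp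
  qed
  then have "?E \<subseteq> {x. R \<subseteq> fst x}" by blast
  then have "emeasure (rha_level k s) ?E \<le> emeasure (rha_level k s) {x. R \<subseteq> fst x}"
    by (rule emeasure_mono) simp
  also have "\<dots> = ennreal (real (((k (s - 1))\<^sup>2 - m) choose (k s - m)) / real ((k (s - 1))\<^sup>2 choose k s))"
    using emeasure_rha_level_supset[OF s, of R] card m by (simp add: R_def)
  finally show ?thesis .
next
  case True
  show ?thesis unfolding True by simp
qed

end

section \<open>Uniform indices\<close>

definition determined_by_pairs :: "nat \<Rightarrow> (nat \<Rightarrow> (nat \<Rightarrow> (nat \<times> nat) set \<times> nat) set) \<Rightarrow> bool" where
  "determined_by_pairs s F \<longleftrightarrow> (\<forall>i \<omega> \<omega>'. (\<forall>m\<le>s. fst (\<omega> m) = fst (\<omega>' m)) \<longrightarrow> (\<omega> \<in> F i \<longleftrightarrow> \<omega>' \<in> F i))"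

text \<open>J is uniform on {1..k s} and independent of all pair sets of levels up to s.\<close>
definition uniform_index :: "(nat \<Rightarrow> nat) \<Rightarrow> nat \<Rightarrow> ((nat \<Rightarrow> (nat \<times> nat) set \<times> nat) \<Rightarrow> nat) \<Rightarrow> bool" where
  "uniform_index k s J \<longleftrightarrow> rha_rv k J \<and>
     (\<forall>F. (\<forall>i. F i \<in> sets (rha_space k)) \<longrightarrow> determined_by_pairs s F \<longrightarrow>
       of_nat (k s) * emeasure (rha_space k) {\<omega>. \<omega> \<in> F (J \<omega>)} = (\<Sum>i\<in>{1..k s}. emeasure (rha_space k) (F i)))"

lemma determined_by_pairs_fun_upd:
  "determined_by_pairs s F \<Longrightarrow> s < t \<Longrightarrow> fun_upd \<omega> t x \<in> F i \<longleftrightarrow> \<omega> \<in> F i"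
  unfolding determined_by_pairs_def by (metis fun_upd_other not_le)

lemma uniform_indexI:
  assumes "rha_rv k J"
    and "\<And>F. (\<And>i. F i \<in> sets (rha_space k)) \<Longrightarrow> determined_by_pairs s F \<Longrightarrow>
       of_nat (k s) * emeasure (rha_space k) {\<omega>. \<omega> \<in> F (J \<omega>)} = (\<Sum>i\<in>{1..k s}. emeasure (rha_space k) (F i))"
  shows "uniform_index k s J"
  using assms by (auto simp: uniform_index_def)

lemma uniform_indexD:
  "uniform_index k s J \<Longrightarrow> (\<And>i. F i \<in> sets (rha_space k)) \<Longrightarrow> determined_by_pairs s F \<Longrightarrow>
    of_nat (k s) * emeasure (rha_space k) {\<omega>. \<omega> \<in> F (J \<omega>)} = (\<Sum>i\<in>{1..k s}. emeasure (rha_space k) (F i))"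
  by (simp add: uniform_index_def)

context rha
begin

lemma uniform_index_level: "uniform_index k s (\<lambda>\<omega>. snd (\<omega> s))"
proof (rule uniform_indexI[OF rha_rv_level])
  fix F assume F: "\<And>i. F i \<in> sets (rha_space k)" and det: "determined_by_pairs s F"
  let ?L = "rha_level k s" and ?E = "{\<omega>. \<omega> \<in> F (snd (\<omega> s))}"
  have E: "?E \<in> sets (rha_space k)" by (rule sets_rha_space_select[OF rha_rv_level F])
  obtain p where L: "?L = pair_pmf p (pmf_of_set {1..k s})"
    by (cases s) (auto simp: rha_level_def)
  have pointwise: "of_nat (k s) * emeasure ?L {x. fun_upd \<omega> s x \<in> ?E} = (\<Sum>i\<in>{1..k s}. emeasure ?L {x. fun_upd \<omega> s x \<in> F i})"
    for \<omega>
  proof -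
    have "fun_upd \<omega> s (a, b) \<in> F i \<longleftrightarrow> fun_upd \<omega> s (a, b') \<in> F i" for i a b b'
      using det by (simp add: determined_by_pairs_def)
    then show ?thesis
      using card_mult_emeasure_pair_pmf_of_set_snd[of "{1..k s}" "\<lambda>i x. fun_upd \<omega> s x \<in> F i" p] k_pos[of s]
      by (simp add: L)
  qed
  have "of_nat (k s) * emeasure (rha_space k) ?E =
      of_nat (k s) * (\<integral>\<^sup>+\<omega>. emeasure ?L {x. fun_upd \<omega> s x \<in> ?E} \<partial>rha_space k)"
    by (simp only: emeasure_rha_space_resample[OF E, of s])
  also have "\<dots> = (\<integral>\<^sup>+\<omega>. of_nat (k s) * emeasure ?L {x. fun_upd \<omega> s x \<in> ?E} \<partial>rha_space k)"
    by (rule nn_integral_cmult[symmetric, OF borel_measurable_rha_space_resample[OF E]])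
  also have "\<dots> = (\<integral>\<^sup>+\<omega>. (\<Sum>i\<in>{1..k s}. emeasure ?L {x. fun_upd \<omega> s x \<in> F i}) \<partial>rha_space k)"
    by (simp only: pointwise)
  also have "\<dots> = (\<Sum>i\<in>{1..k s}. emeasure (rha_space k) (F i))"
    using F by (simp add: nn_integral_sum borel_measurable_rha_space_resample emeasure_rha_space_resample[of _ _ s])
  finally show "of_nat (k s) * emeasure (rha_space k) ?E = (\<Sum>i\<in>{1..k s}. emeasure (rha_space k) (F i))" .
qed

lemma sum_emeasure_rha_level_resample_select:
  assumes s: "1 \<le> s"
    and card: "\<And>i. i \<in> {1..k (s - 1)} \<Longrightarrow> card {p \<in> {1..k (s - 1)} \<times> {1..k (s - 1)}. sel p = i} = k (s - 1)"
    and range: "\<And>p. p \<in> {1..k (s - 1)} \<times> {1..k (s - 1)} \<Longrightarrow> sel p \<in> {1..k (s - 1)}"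
    and det: "determined_by_pairs (s - 1) F"
  shows "(\<Sum>t\<in>{1..k s}. emeasure (rha_level k s) {x. fun_upd \<omega> s x \<in> F (sel (rha_LR k (fun_upd \<omega> s x) s t))}) =
    ennreal (real (k s) / real (k (s - 1))) * (\<Sum>i\<in>{1..k (s - 1)}. indicator (F i) \<omega>)"
proof -
  let ?K = "k (s - 1)"
  have "{x. fun_upd \<omega> s x \<in> F (sel (rha_LR k (fun_upd \<omega> s x) s t))} =
      {x. sel (nth_pair ?K (fst x) t) \<in> {i. \<omega> \<in> F i}}" for t
    using determined_by_pairs_fun_upd[OF det] s by (simp add: rha_LR_eq_nth_pair)
  then have "(\<Sum>t\<in>{1..k s}. emeasure (rha_level k s) {x. fun_upd \<omega> s x \<in> F (sel (rha_LR k (fun_upd \<omega> s x) s t))}) =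
      of_nat (card ({i. \<omega> \<in> F i} \<inter> {1..?K})) * ennreal (real (k s) / real ?K)"
    by (simp only: sum_emeasure_rha_level_select_mem[OF s card range])
  also have "of_nat (card ({i. \<omega> \<in> F i} \<inter> {1..?K})) = (\<Sum>i\<in>{1..?K}. indicator (F i) \<omega> :: ennreal)"
    by (simp add: indicator_def sum.If_cases Int_def conj_commute)
  finally show ?thesis by (simp only: mult.commute)
qed

lemma uniform_index_select:
  assumes s: "1 \<le> s" and J: "uniform_index k s J"
    and card: "\<And>i. i \<in> {1..k (s - 1)} \<Longrightarrow> card {p \<in> {1..k (s - 1)} \<times> {1..k (s - 1)}. sel p = i} = k (s - 1)"
    and range: "\<And>p. p \<in> {1..k (s - 1)} \<times> {1..k (s - 1)} \<Longrightarrow> sel p \<in> {1..k (s - 1)}"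
  shows "uniform_index k (s - 1) (\<lambda>\<omega>. sel (rha_LR k \<omega> s (J \<omega>)))"
proof -
  let ?K = "k (s - 1)" and ?L = "rha_level k s" and ?M = "rha_space k"
  have rv_sel: "rha_rv k (\<lambda>\<omega>. sel (rha_LR k \<omega> s t))" for t
    using rha_rv_level[where g="\<lambda>x. sel (nth_pair ?K (fst x) t)" and s=s] by (simp add: rha_LR_eq_nth_pair)
  have rv_J: "rha_rv k J" using J by (simp add: uniform_index_def)
  show ?thesis
  proof (rule uniform_indexI[OF rha_rv_select[OF rv_J rv_sel]])
    fix F assume F: "\<And>i. F i \<in> sets ?M" and det: "determined_by_pairs (s - 1) F"
    define F' where "F' t = {\<omega>. \<omega> \<in> F (sel (rha_LR k \<omega> s t))}" for t
    have F': "F' t \<in> sets ?M" for t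
      unfolding F'_def by (rule sets_rha_space_select[OF rv_sel F])
    have det': "determined_by_pairs s F'"
      using det s unfolding determined_by_pairs_def F'_def by (auto simp: rha_LR_def)
    have "of_nat (k s) * emeasure ?M {\<omega>. \<omega> \<in> F' (J \<omega>)} = (\<Sum>t\<in>{1..k s}. emeasure ?M (F' t))"
      by (rule uniform_indexD[OF J F' det'])
    then have "of_nat (k s) * emeasure ?M {\<omega>. \<omega> \<in> F (sel (rha_LR k \<omega> s (J \<omega>)))} = (\<Sum>t\<in>{1..k s}. emeasure ?M (F' t))"
      by (simp add: F'_def)
    also have "\<dots> = (\<integral>\<^sup>+\<omega>. (\<Sum>t\<in>{1..k s}. emeasure ?L {x. fun_upd \<omega> s x \<in> F' t}) \<partial>?M)"
      using F' by (simp add: emeasure_rha_space_resample[of _ _ s] nn_integral_sum borel_measurable_rha_space_resample)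
    also have "\<dots> = (\<integral>\<^sup>+\<omega>. ennreal (real (k s) / real ?K) * (\<Sum>i\<in>{1..?K}. indicator (F i) \<omega>) \<partial>?M)"
      using sum_emeasure_rha_level_resample_select[OF s card range det] by (simp add: F'_def)
    also have "\<dots> = ennreal (real (k s) / real ?K) * (\<Sum>i\<in>{1..?K}. emeasure ?M (F i))"
      using F by (simp add: nn_integral_cmult nn_integral_sum)
    finally have eq: "of_nat (k s) * emeasure ?M {\<omega>. \<omega> \<in> F (sel (rha_LR k \<omega> s (J \<omega>)))} =
        ennreal (real (k s) / real ?K) * (\<Sum>i\<in>{1..?K}. emeasure ?M (F i))" .
    have Kc: "of_nat ?K * ennreal (real (k s) / real ?K) = of_nat (k s)"
      using k_pos[of "s - 1"] by (simp add: ennreal_of_nat_eq_real_of_nat flip: ennreal_mult)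
    let ?P = "emeasure ?M {\<omega>. \<omega> \<in> F (sel (rha_LR k \<omega> s (J \<omega>)))}"
    have "of_nat (k s) * (of_nat ?K * ?P) = of_nat ?K * (of_nat (k s) * ?P)"
      by (simp only: ac_simps)
    also have "\<dots> = (of_nat ?K * ennreal (real (k s) / real ?K)) * (\<Sum>i\<in>{1..?K}. emeasure ?M (F i))"
      by (simp only: eq mult.assoc)
    finally have "of_nat (k s) * (of_nat ?K * ?P) = of_nat (k s) * (\<Sum>i\<in>{1..?K}. emeasure ?M (F i))"
      by (simp only: Kc)
    then show "of_nat ?K * emeasure ?M {\<omega>. \<omega> \<in> F (sel (rha_LR k \<omega> s (J \<omega>)))} = (\<Sum>i\<in>{1..?K}. emeasure ?M (F i))"
      using k_pos[of s] by (simp add: ennreal_mult_cancel_left)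
  qed
qed

lemma uniform_index_rha_LR:
  assumes s: "1 \<le> s" and J: "uniform_index k s J"
  shows "uniform_index k (s - 1) (\<lambda>\<omega>. fst (rha_LR k \<omega> s (J \<omega>)))"
    and "uniform_index k (s - 1) (\<lambda>\<omega>. snd (rha_LR k \<omega> s (J \<omega>)))"
proof -
  let ?I = "{1..k (s - 1)}"
  have "card {p \<in> ?I \<times> ?I. fst p = i} = k (s - 1)" if "i \<in> ?I" for i
  proof -
    have "{p \<in> ?I \<times> ?I. fst p = i} = {i} \<times> ?I" using that by auto
    then show ?thesis by (simp add: card_cartesian_product)
  qed
  then show "uniform_index k (s - 1) (\<lambda>\<omega>. fst (rha_LR k \<omega> s (J \<omega>)))"
    by (rule uniform_index_select[OF s J]) auto
  have "card {p \<in> ?I \<times> ?I. snd p = i} = k (s - 1)" if "i \<in> ?I" for i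
  proof -
    have "{p \<in> ?I \<times> ?I. snd p = i} = ?I \<times> {i}" using that by auto
    then show ?thesis by (simp add: card_cartesian_product)
  qed
  then show "uniform_index k (s - 1) (\<lambda>\<omega>. snd (rha_LR k \<omega> s (J \<omega>)))"
    by (rule uniform_index_select[OF s J]) auto
qed

lemma uniform_index_rha_sub:
  "uniform_index k (l + d) J \<Longrightarrow> uniform_index k l (\<lambda>\<omega>. rha_sub k \<omega> l d (J \<omega>) q)"
proof (induction d arbitrary: J q)
  case (Suc d)
  have "uniform_index k (l + d) (\<lambda>\<omega>. fst (rha_LR k \<omega> (Suc (l + d)) (J \<omega>)))"
    "uniform_index k (l + d) (\<lambda>\<omega>. snd (rha_LR k \<omega> (Suc (l + d)) (J \<omega>)))"
    using uniform_index_rha_LR[of "Suc (l + d)" J] Suc.prems by simp_all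
  then show ?case
    using Suc.IH[of _ q] Suc.IH[of _ "q - 2 ^ d"] by (cases "q < 2 ^ d") simp_all
qed simp

lemma emeasure_rha_block_eq_block_one:
  assumes j: "1 \<le> j"
  shows "emeasure (rha_space k) {\<omega>. P (rha_block k \<omega> n j)} = emeasure (rha_space k) {\<omega>. P (rha_block k \<omega> n 1)}"
proof -
  define F where "F i = {\<omega>. P (rha_Y k \<omega> n i)}" for i
  have F: "F i \<in> sets (rha_space k)" for i
    unfolding F_def by (rule sets_rha_space_Collect[OF rha_rv_rha_Y])
  have det: "determined_by_pairs n F"
    unfolding determined_by_pairs_def F_def by (metis (mono_tags) mem_Collect_eq rha_Y_cong)
  have "of_nat (k n) * emeasure (rha_space k) {\<omega>. P (rha_block k \<omega> n j')} = (\<Sum>i\<in>{1..k n}. emeasure (rha_space k) (F i))"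
    if j': "1 \<le> j'" for j'
  proof -
    obtain a where a: "2 ^ a \<le> j'" "j' < 2 ^ Suc a"
      using ex_power_ivl1[of 2 j'] j' by auto
    have "uniform_index k n (\<lambda>\<omega>. rha_sub k \<omega> n a (snd (\<omega> (n + a))) (j' - 2 ^ a))"
      by (intro uniform_index_rha_sub uniform_index_level)
    moreover have "{\<omega>. P (rha_block k \<omega> n j')} = {\<omega>. \<omega> \<in> F (rha_sub k \<omega> n a (snd (\<omega> (n + a))) (j' - 2 ^ a))}"
      using rha_block_eq_rha_Y[OF a] by (simp add: F_def)
    ultimately show ?thesis
      using uniform_indexD[OF _ F det] by simp
  qed
  from this[OF j] this[of 1] have "of_nat (k n) * emeasure (rha_space k) {\<omega>. P (rha_block k \<omega> n j)} =
      of_nat (k n) * emeasure (rha_space k) {\<omega>. P (rha_block k \<omega> n 1)}"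
    by simp
  then show ?thesis
    using k_pos[of n] by (simp add: ennreal_mult_cancel_left)
qed

end

definition blocks_realized :: "(nat \<Rightarrow> nat) \<Rightarrow> nat \<Rightarrow> nat list \<Rightarrow> nat \<Rightarrow> (nat \<Rightarrow> (nat \<times> nat) set \<times> nat) set" where
  "blocks_realized k l z m = {\<omega>. \<forall>q<m. \<exists>a\<in>{1..k (l - 1)}. \<exists>b\<in>{1..k (l - 1)}.
     (a, b) \<in> fst (\<omega> l) \<and> rha_Y k \<omega> (l - 1) a @ rha_Y k \<omega> (l - 1) b = sub_block l z q}"

lemma sets_blocks_realized: "blocks_realized k l z m \<in> sets (rha_space k)"
proof -
  let ?K = "k (l - 1)"
  define G where "G x ys \<longleftrightarrow> (\<forall>q<m. \<exists>a\<in>{1..?K}. \<exists>b\<in>{1..?K}. (a, b) \<in> fst x \<and> ys ! a @ ys ! b = sub_block l z q)"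
    for x :: "(nat \<times> nat) set \<times> nat" and ys :: "nat list list"
  \<comment> \<open>Tabulating Y^{l-1} as a list makes the event a function of one level and one countable value.\<close>
  have "blocks_realized k l z m = {\<omega>. G (\<omega> l) (map (rha_Y k \<omega> (l - 1)) [0..<?K + 1])}"
    unfolding blocks_realized_def G_def by (auto simp del: upt_Suc)
  moreover have "rha_rv k (\<lambda>\<omega>. G (\<omega> l) (map (rha_Y k \<omega> (l - 1)) [0..<?K + 1]))"
    by (rule rha_rv_select[where f="\<lambda>ys \<omega>. G (\<omega> l) ys", OF rha_rv_map rha_rv_level])
      (rule rha_rv_rha_Y)
  ultimately show ?thesis
    by (simp only: sets_rha_space_Collect[where P="\<lambda>b. b"])
qed

context rha
begin

lemma AE_rha_block_eq_imp_blocks_realized: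
  assumes l: "1 \<le> l" "l \<le> n" and j: "1 \<le> j"
  shows "AE \<omega> in rha_space k. rha_block k \<omega> n j = z \<longrightarrow> \<omega> \<in> blocks_realized k l z (2 ^ (n - l))"
  using AE_rha_ok
proof eventually_elim
  case (elim \<omega>)
  obtain i where i: "i \<in> {1..k n}" "rha_block k \<omega> n j = rha_Y k \<omega> n i"
    using rha_block_is_rha_Y[OF elim j] .
  show ?case
  proof (intro impI, unfold blocks_realized_def, intro CollectI allI impI)
    fix q :: nat assume z: "rha_block k \<omega> n j = z" and q: "q < 2 ^ (n - l)"
    obtain a b where "(a, b) \<in> fst (\<omega> l)" "a \<in> {1..k (l - 1)}" "b \<in> {1..k (l - 1)}"
      "sub_block l (rha_Y k \<omega> n i) q = rha_Y k \<omega> (l - 1) a @ rha_Y k \<omega> (l - 1) b"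
      by (rule sub_block_rha_Y_pair[OF elim l i(1) q])
    with z i(2) show "\<exists>a\<in>{1..k (l - 1)}. \<exists>b\<in>{1..k (l - 1)}. (a, b) \<in> fst (\<omega> l) \<and>
        rha_Y k \<omega> (l - 1) a @ rha_Y k \<omega> (l - 1) b = sub_block l z q"
      by (intro bexI[of _ a] bexI[of _ b] conjI) simp_all
  qed
qed

lemma emeasure_blocks_realized_le:
  assumes l: "1 \<le> l" and m: "m \<le> k l" and z: "distinct (map (sub_block l z) [0..<m])"
  shows "emeasure (rha_space k) (blocks_realized k l z m) \<le>
    ennreal (real (((k (l - 1))\<^sup>2 - m) choose (k l - m)) / real ((k (l - 1))\<^sup>2 choose k l))"
    (is "_ \<le> ?r")
proof -
  let ?E = "blocks_realized k l z m"
  have "emeasure (rha_space k) ?E = (\<integral>\<^sup>+\<omega>. emeasure (rha_level k l) {x. fun_upd \<omega> l x \<in> ?E} \<partial>rha_space k)"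
    by (rule emeasure_rha_space_resample[OF sets_blocks_realized])
  also have "\<dots> \<le> (\<integral>\<^sup>+\<omega>. ?r \<partial>rha_space k)"
  proof (rule nn_integral_mono_AE)
    show "AE \<omega> in rha_space k. emeasure (rha_level k l) {x. fun_upd \<omega> l x \<in> ?E} \<le> ?r"
      using AE_rha_ok
    proof eventually_elim
      case (elim \<omega>)
      have "rha_Y k (fun_upd \<omega> l x) (l - 1) a = rha_Y k \<omega> (l - 1) a" for x a
        using l by (intro rha_Y_cong) auto
      then have "{x. fun_upd \<omega> l x \<in> ?E} = {x. \<forall>q<m. \<exists>a\<in>{1..k (l - 1)}. \<exists>b\<in>{1..k (l - 1)}.
          (a, b) \<in> fst x \<and> rha_Y k \<omega> (l - 1) a @ rha_Y k \<omega> (l - 1) b = sub_block l z q}"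
        by (simp add: blocks_realized_def)
      also have "emeasure (rha_level k l) \<dots> \<le> ?r"
        by (rule emeasure_rha_level_contains_pairs_le[OF l inj_on_rha_Y[OF elim] _ z m, of "2 ^ (l - 1)"])
          simp
      finally show ?case .
    qed
  qed
  also have "\<dots> = ?r"
    using prob_space.emeasure_space_1[OF prob_space_rha_space] by simp
  finally show ?thesis .
qed

lemma ent_rha_block_ge:
  assumes l: "1 \<le> l" "l \<le> n" and j: "1 \<le> j" and m: "2 ^ (n - l) \<le> k l"
  shows "(ln (real ((k (l - 1))\<^sup>2 choose k l))
      - ln (real (((k (l - 1))\<^sup>2 - 2 ^ (n - l)) choose (k l - 2 ^ (n - l)))))
    * measure (rha_space k) (rha_A k n l) \<le> ent (rha_space k) (\<lambda>\<omega>. rha_block k \<omega> n j)"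
proof -
  interpret prob_space "rha_space k" by (rule prob_space_rha_space)
  let ?m = "2 ^ (n - l) :: nat" and ?N = "(k (l - 1))\<^sup>2"
  define a where "a = real (?N choose k l)"
  define b where "b = real ((?N - ?m) choose (k l - ?m))"
  define B where "B = {z :: nat list. distinct (map (sub_block l z) [0..<?m])}"
  define V where "V = {xs. set xs \<subseteq> {1..k 0} \<and> length xs = 2 ^ n}"
  have "k l \<le> ?N" using k_le_square l by simp
  then have ab: "0 < a" "0 < b" using m by (simp_all add: a_def b_def)
  have "finite V"
    unfolding V_def by (rule finite_lists_length_eq) simp
  moreover have "AE \<omega> in rha_space k. rha_block k \<omega> n j \<in> V"
    using AE_rha_ok
  proof eventually_elim
    case (elim \<omega>)
    obtain i where "i \<in> {1..k n}" "rha_block k \<omega> n j = rha_Y k \<omega> n i"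
      using rha_block_is_rha_Y[OF elim j] .
    then show ?case using set_rha_Y_subset[OF elim] by (simp add: V_def)
  qed
  moreover have "prob {\<omega> \<in> space (rha_space k). rha_block k \<omega> n j = v} \<le> exp (- (ln a - ln b))" if "v \<in> B" for v
  proof -
    have "emeasure (rha_space k) {\<omega>. rha_block k \<omega> n j = v} \<le> emeasure (rha_space k) (blocks_realized k l v ?m)"
      using AE_rha_block_eq_imp_blocks_realized[OF l j] sets_blocks_realized
      by (intro emeasure_mono_AE) (simp_all add: sets_rha_space_Collect rha_rv_rha_block)
    also have "\<dots> \<le> ennreal (b / a)"
      using emeasure_blocks_realized_le[OF l(1) m, of v] that by (simp add: B_def a_def b_def)
    finally have "emeasure (rha_space k) {\<omega>. rha_block k \<omega> n j = v} \<le> ennreal (b / a)" .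
    then show ?thesis
      using ab by (simp add: exp_diff emeasure_eq_measure ennreal_le_iff)
  qed
  ultimately have "(ln a - ln b) * prob {\<omega> \<in> space (rha_space k). rha_block k \<omega> n j \<in> B} \<le>
      ent (rha_space k) (\<lambda>\<omega>. rha_block k \<omega> n j)"
    by (intro ent_ge_light_values rha_rv_rha_block)
  moreover have "prob {\<omega> \<in> space (rha_space k). rha_block k \<omega> n j \<in> B} = prob (rha_A k n l)"
    using emeasure_rha_block_eq_block_one[OF j, of "\<lambda>z. z \<in> B" n] rha_A_eq[OF l(2)]
    by (simp add: measure_def B_def)
  ultimately show ?thesis by (simp add: a_def b_def)
qed

end

theorem proposition11:
  fixes k :: "nat \<Rightarrow> nat" and n j :: nat
  assumes kpos: "\<forall>m. 0 < k m"
    and kgrowth: "\<forall>m\<ge>1. k (m - 1) \<le> k m \<and> k m \<le> (k (m - 1))\<^sup>2"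
    and n: "1 \<le> n" and j: "1 \<le> j"
  shows "ent (rha_space k) (\<lambda>\<omega>. rha_block k \<omega> n j) \<ge>
    Max ((\<lambda>l. (ln (real ((k (l - 1))\<^sup>2 choose k l))
               - ln (real (((k (l - 1))\<^sup>2 - 2 ^ (n - l)) choose (k l - 2 ^ (n - l)))))
             * measure (rha_space k) (rha_A k n l))
         ` {l \<in> {1..n}. 2 ^ (n - l) \<le> k l})"
proof -
  interpret rha k
    using kpos kgrowth by unfold_locales auto
  let ?f = "\<lambda>l. (ln (real ((k (l - 1))\<^sup>2 choose k l))
               - ln (real (((k (l - 1))\<^sup>2 - 2 ^ (n - l)) choose (k l - 2 ^ (n - l)))))
             * measure (rha_space k) (rha_A k n l)"
  let ?S = "{l \<in> {1..n}. 2 ^ (n - l) \<le> k l}"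
  have "n \<in> ?S" using n kpos by (simp add: Suc_le_eq)
  then have "Max (?f ` ?S) \<in> ?f ` ?S" by (intro Max_in) auto
  then obtain l where "l \<in> ?S" "Max (?f ` ?S) = ?f l" by auto
  then show ?thesis using ent_rha_block_ge j by auto
qed

end
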